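(* Let $\phi(w)=aw+ib$ with $a>0$ and $b\in\mathbb{R}$. Then $C_\phi$ is an invertible operator on $H^2(\mathbb{C}_{+})$, and the following are equivalent: (1) $C_{\phi}$ is expansive on $H^2(\mathbb{C}_{+})$; (2) $C_{\phi}$ is uniformly expansive on $H^2(\mathbb{C}_{+})$; (3) $\phi$ is of hyperbolic type, i.e. $a\neq 1$.
   Context: $\mathbb{C}_{+}=\{w\in\mathbb{C}:\mathrm{Re}(w)>0\}$. $H^2(\mathbb{C}_{+})$ is the Hardy space of holomorphic $f$ on $\mathbb{C}_{+}$ with finite norm $\|f\|_2^2=\sup_{0<x<\infty}\frac{1}{\pi}\int_{-\infty}^{\infty}|f(x+iy)|^2\,dy$, and $C_\phi f=f\circ\phi$. For an invertible operator $T$ on a Banach space $X$ with unit sphere $S_X$: $T$ is expansive if for every $z\in S_X$ there is $n\in\mathbb{Z}$ with $\|T^nz\|\ge2$; $T$ is uniformly expansive if there exists $n\in\mathbb{N}$ such that for every $z\in S_X$, $\|T^nz\|\ge 2$ or $\|T^{-n}z\|\ge2$. *)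

theory Defs
  imports "HOL-Analysis.Analysis"
begin

definition RHP :: "complex set" where
  "RHP = {w. 0 < Re w}"

definition H2_norm_sq :: "(complex \<Rightarrow> complex) \<Rightarrow> ennreal" where
  "H2_norm_sq f = (SUP x\<in>{0<..}. ennreal (1/pi) *
       (\<integral>\<^sup>+ y. ennreal ((cmod (f (Complex x y)))\<^sup>2) \<partial>lborel))"

definition H2_norm :: "(complex \<Rightarrow> complex) \<Rightarrow> real" where
  "H2_norm f = sqrt (enn2real (H2_norm_sq f))"

text \<open>Elements of H^2 are represented canonically: holomorphic on the half plane,
  finite norm, and extended by 0 off the half plane.\<close>
definition H2 :: "(complex \<Rightarrow> complex) set" where
  "H2 = {f. f holomorphic_on RHP \<and> H2_norm_sq f < \<infinity> \<and> (\<forall>w. w \<notin> RHP \<longrightarrow> f w = 0)}"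

definition comp_op :: "(complex \<Rightarrow> complex) \<Rightarrow> (complex \<Rightarrow> complex) \<Rightarrow> (complex \<Rightarrow> complex)" where
  "comp_op \<phi> f = (\<lambda>w. if w \<in> RHP then f (\<phi> w) else 0)"

definition bounded_op_H2 :: "((complex \<Rightarrow> complex) \<Rightarrow> (complex \<Rightarrow> complex)) \<Rightarrow> bool" where
  "bounded_op_H2 S \<longleftrightarrow> (\<forall>f\<in>H2. S f \<in> H2) \<and> (\<exists>K. \<forall>f\<in>H2. H2_norm (S f) \<le> K * H2_norm f)"

definition inverse_op_H2 :: "((complex \<Rightarrow> complex) \<Rightarrow> (complex \<Rightarrow> complex)) \<Rightarrow> ((complex \<Rightarrow> complex) \<Rightarrow> (complex \<Rightarrow> complex)) \<Rightarrow> bool" where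
  "inverse_op_H2 S T \<longleftrightarrow> bounded_op_H2 T \<and> (\<forall>f\<in>H2. T (S f) = f \<and> S (T f) = f)"

definition invertible_op_H2 :: "((complex \<Rightarrow> complex) \<Rightarrow> (complex \<Rightarrow> complex)) \<Rightarrow> bool" where
  "invertible_op_H2 S \<longleftrightarrow> bounded_op_H2 S \<and> (\<exists>T. inverse_op_H2 S T)"

definition int_pow_op where
  "int_pow_op S T (n::int) = (if 0 \<le> n then S ^^ nat n else T ^^ nat (- n))"

definition expansive_H2 where
  "expansive_H2 S T \<longleftrightarrow> (\<forall>f\<in>H2. H2_norm f = 1 \<longrightarrow> (\<exists>n::int. H2_norm (int_pow_op S T n f) \<ge> 2))"

definition unif_expansive_H2 where
  "unif_expansive_H2 S T \<longleftrightarrow> (\<exists>n::nat. \<forall>f\<in>H2. H2_norm f = 1 \<longrightarrow>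
       H2_norm ((S ^^ n) f) \<ge> 2 \<or> H2_norm ((T ^^ n) f) \<ge> 2)"

end

theory Submission
  imports Defs "HOL-Probability.Sinc_Integral"
begin

text \<open>The substitution \<open>w \<mapsto> a w + i b\<close> maps each vertical line \<open>Re w = x\<close> affinely onto
  the line \<open>Re w = a x\<close>, stretching it by the factor \<open>a\<close>; hence \<open>\<parallel>C\<^sub>\<phi> f\<parallel> = \<parallel>f\<parallel> / sqrt a\<close>
  for every \<open>f\<close>, and \<open>C\<^sub>\<phi>\<close> is invertible with inverse \<open>C\<^sub>\<psi>\<close>, \<open>\<psi> = \<phi>\<inverse>\<close>.
  An invertible operator multiplying every norm by a constant \<open>c\<close> multiplies it by \<open>c\<^sup>n\<close>
  under its \<open>n\<close>-th power and by \<open>c\<^sup>-\<^sup>n\<close> under the \<open>n\<close>-th power of its inverse: for \<open>c = 1\<close>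
  no unit vector is ever expanded, while for \<open>c \<noteq> 1\<close> a single power of the operator or of
  its inverse doubles the norm of every unit vector.\<close>

lemma H2_line_measurable:
  assumes "f \<in> H2" "x > 0"
  shows "(\<lambda>y. ennreal ((cmod (f (Complex x y)))\<^sup>2)) \<in> borel_measurable borel"
proof -
  have "continuous_on RHP f"
    using assms(1) holomorphic_on_imp_continuous_on unfolding H2_def by blast
  moreover have "continuous_on UNIV (\<lambda>y. Complex x y)"
    by (intro continuous_intros)
  moreover have "(\<lambda>y. Complex x y) ` UNIV \<subseteq> RHP"
    using assms(2) by (auto simp: RHP_def)
  ultimately have "continuous_on UNIV (\<lambda>y. f (Complex x y))"
    using continuous_on_compose2 by blast
  then have "continuous_on UNIV (\<lambda>y. (cmod (f (Complex x y)))\<^sup>2)"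
    by (intro continuous_intros)
  then have "(\<lambda>y. (cmod (f (Complex x y)))\<^sup>2) \<in> borel_measurable borel"
    by (rule borel_measurable_continuous_onI)
  then show ?thesis
    by measurable
qed

lemma H2_norm_eq_if_H2_norm_sq_eq:
  assumes "f \<in> H2" "k \<ge> 0" "H2_norm_sq g = ennreal k * H2_norm_sq f"
  shows "H2_norm g = sqrt k * H2_norm f"
  using assms by (simp add: H2_def H2_norm_def enn2real_mult real_sqrt_mult)

lemma H2_norm_sq_of_real_mult:
  assumes f: "f \<in> H2"
  shows "H2_norm_sq (\<lambda>w. complex_of_real c * f w) = ennreal (c\<^sup>2) * H2_norm_sq f"
proof -
  have line: "(\<integral>\<^sup>+ y. ennreal ((cmod (complex_of_real c * f (Complex x y)))\<^sup>2) \<partial>lborel)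
     = ennreal (c\<^sup>2) * (\<integral>\<^sup>+ y. ennreal ((cmod (f (Complex x y)))\<^sup>2) \<partial>lborel)" if "x > 0" for x
    using H2_line_measurable[OF f that]
    by (simp add: norm_mult power_mult_distrib ennreal_mult nn_integral_cmult)
  have "H2_norm_sq (\<lambda>w. complex_of_real c * f w) = (SUP x\<in>{0<..}. ennreal (1/pi) *
       (ennreal (c\<^sup>2) * (\<integral>\<^sup>+ y. ennreal ((cmod (f (Complex x y)))\<^sup>2) \<partial>lborel)))"
    unfolding H2_norm_sq_def by (intro SUP_cong refl) (simp add: line)
  also have "\<dots> = ennreal (c\<^sup>2) * H2_norm_sq f"
    unfolding H2_norm_sq_def by (simp add: SUP_mult_left_ennreal mult.left_commute)
  finally show ?thesis .
qed

lemma of_real_mult_in_H2: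
  assumes "f \<in> H2"
  shows "(\<lambda>w. complex_of_real c * f w) \<in> H2"
  using assms H2_norm_sq_of_real_mult[OF assms, of c]
  by (auto simp: H2_def ennreal_mult_less_top intro!: holomorphic_intros)

lemma H2_norm_of_real_mult:
  assumes "f \<in> H2"
  shows "H2_norm (\<lambda>w. complex_of_real c * f w) = \<bar>c\<bar> * H2_norm f"
  using H2_norm_eq_if_H2_norm_sq_eq[OF assms _ H2_norm_sq_of_real_mult[OF assms]] by simp

definition shifted_inverse :: "complex \<Rightarrow> complex" where
  "shifted_inverse w = (if 0 < Re w then 1 / (w + 1) else 0)"

lemma norm_shifted_inverse_line:
  assumes "x > 0"
  shows "(cmod (shifted_inverse (Complex x y)))\<^sup>2 = 1 / ((x+1)\<^sup>2 + y\<^sup>2)"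
proof -
  have "Complex x y + 1 = Complex (x+1) y"
    by (simp add: complex_eq_iff)
  then show ?thesis
    using assms by (simp add: shifted_inverse_def norm_divide cmod_power2 power_divide)
qed

lemma shifted_inverse_in_H2: "shifted_inverse \<in> H2"
proof -
  have "shifted_inverse holomorphic_on RHP"
  proof (rule holomorphic_transform[of "\<lambda>w. 1 / (w + 1)"])
    show "(\<lambda>w. 1 / (w + 1)) holomorphic_on RHP"
      by (intro holomorphic_intros) (auto simp: RHP_def complex_eq_iff)
  qed (auto simp: shifted_inverse_def RHP_def)
  moreover have "H2_norm_sq shifted_inverse \<le> ennreal (1/pi) * (\<integral>\<^sup>+ y. ennreal (inverse (1 + y\<^sup>2)) \<partial>lborel)"
    unfolding H2_norm_sq_def
  proof (intro SUP_least mult_left_mono nn_integral_mono ennreal_leI)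
    fix x y :: real
    assume "x \<in> {0<..}"
    then have "1 + y\<^sup>2 \<le> (x+1)\<^sup>2 + y\<^sup>2"
      by (simp add: power2_eq_square algebra_simps)
    then show "(cmod (shifted_inverse (Complex x y)))\<^sup>2 \<le> inverse (1 + y\<^sup>2)"
      using \<open>x \<in> {0<..}\<close>
      by (simp add: norm_shifted_inverse_line inverse_eq_divide frac_le add_pos_nonneg)
  qed simp
  moreover have "ennreal (1/pi) * (\<integral>\<^sup>+ y. ennreal (inverse (1 + y\<^sup>2)) \<partial>lborel) < \<infinity>"
    using integrable_inverse_1_plus_square
    by (simp add: set_integrable_def integrable_iff_bounded ennreal_mult_less_top)
  ultimately show ?thesis
    by (auto simp: H2_def shifted_inverse_def RHP_def dest: le_less_trans)
qed

lemma H2_norm_shifted_inverse_pos: "H2_norm shifted_inverse > 0"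
proof -
  have "ennreal (1/5) * indicator {0..1} y \<le> ennreal ((cmod (shifted_inverse (Complex 1 y)))\<^sup>2)"
    for y :: real
  proof (cases "y \<in> {0..1}")
    case True
    then have "y\<^sup>2 \<le> 1" by (simp add: abs_square_le_1)
    then show ?thesis
      using True by (simp add: norm_shifted_inverse_line ennreal_leI divide_simps add_pos_nonneg)
  qed simp
  then have "ennreal (1/5) \<le> (\<integral>\<^sup>+ y. ennreal ((cmod (shifted_inverse (Complex 1 y)))\<^sup>2) \<partial>lborel)"
    using nn_integral_mono[of lborel "\<lambda>y. ennreal (1/5) * indicator {0..1::real} y"]
    by (simp add: nn_integral_cmult_indicator)
  then have "ennreal (1/pi) * ennreal (1/5) \<le> H2_norm_sq shifted_inverse"
    unfolding H2_norm_sq_def by (intro SUP_upper2[of 1] mult_left_mono) auto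
  then have "0 < H2_norm_sq shifted_inverse"
    by (rule less_le_trans[rotated]) (simp add: ennreal_mult[symmetric])
  then show ?thesis
    using shifted_inverse_in_H2 by (simp add: H2_def H2_norm_def enn2real_positive_iff)
qed

lemma H2_unit_exists: "\<exists>f\<in>H2. H2_norm f = 1"
proof -
  define c where "c = 1 / H2_norm shifted_inverse"
  have "H2_norm (\<lambda>w. complex_of_real c * shifted_inverse w) = \<bar>c\<bar> * H2_norm shifted_inverse"
    by (rule H2_norm_of_real_mult[OF shifted_inverse_in_H2])
  also have "\<dots> = 1"
    using H2_norm_shifted_inverse_pos by (simp add: c_def)
  finally show ?thesis
    using of_real_mult_in_H2[OF shifted_inverse_in_H2] by blast
qed

lemma H2_norm_sq_comp_affine:
  fixes a b :: real
  assumes a: "a > 0" and f: "f \<in> H2"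
  shows "H2_norm_sq (comp_op (\<lambda>w. complex_of_real a * w + \<i> * complex_of_real b) f)
    = ennreal (1/a) * H2_norm_sq f"
proof -
  let ?\<phi> = "\<lambda>w. complex_of_real a * w + \<i> * complex_of_real b"
  let ?line = "\<lambda>x. \<integral>\<^sup>+ y. ennreal ((cmod (f (Complex x y)))\<^sup>2) \<partial>lborel"
  have line: "(\<integral>\<^sup>+ y. ennreal ((cmod (comp_op ?\<phi> f (Complex x y)))\<^sup>2) \<partial>lborel)
      = ennreal (1/a) * ?line (a * x)" if x: "x > 0" for x
  proof -
    have "?line (a * x)
        = ennreal a * (\<integral>\<^sup>+ y. ennreal ((cmod (f (Complex (a*x) (b + a*y))))\<^sup>2) \<partial>lborel)"
      using nn_integral_real_affine[OF H2_line_measurable[OF f], of "a * x" a b] a x by simp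
    then have "ennreal (1/a) * ?line (a * x)
        = (ennreal (1/a) * ennreal a) * (\<integral>\<^sup>+ y. ennreal ((cmod (f (Complex (a*x) (b + a*y))))\<^sup>2) \<partial>lborel)"
      by (simp only: mult.assoc)
    also have "ennreal (1/a) * ennreal a = 1"
      using a by (simp flip: ennreal_mult)
    finally have "ennreal (1/a) * ?line (a * x)
        = (\<integral>\<^sup>+ y. ennreal ((cmod (f (Complex (a*x) (b + a*y))))\<^sup>2) \<partial>lborel)"
      by simp
    moreover have "?\<phi> (Complex x y) = Complex (a*x) (b + a*y)" for y
      by (simp add: complex_eq_iff)
    ultimately show ?thesis
      using x by (simp add: comp_op_def RHP_def)
  qed
  have "H2_norm_sq (comp_op ?\<phi> f) = (SUP x\<in>{0<..}. ennreal (1/pi) * (ennreal (1/a) * ?line (a * x)))"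
    unfolding H2_norm_sq_def by (intro SUP_cong refl) (simp add: line)
  also have "\<dots> = ennreal (1/a) * (SUP x\<in>{0<..}. ennreal (1/pi) * ?line (a * x))"
    by (simp add: SUP_mult_left_ennreal mult.left_commute)
  also have "(SUP x\<in>{0<..}. ennreal (1/pi) * ?line (a * x)) = (SUP x\<in>(*) a ` {0<..}. ennreal (1/pi) * ?line x)"
    by (simp add: image_comp)
  also have "(*) a ` {0<..} = {0::real<..}"
    using image_linear_greaterThan[of a 0 0] a by simp
  finally show ?thesis
    unfolding H2_norm_sq_def .
qed

lemma comp_affine_in_H2:
  fixes a b :: real
  assumes a: "a > 0" and f: "f \<in> H2"
  shows "comp_op (\<lambda>w. complex_of_real a * w + \<i> * complex_of_real b) f \<in> H2"
proof -
  let ?\<phi> = "\<lambda>w. complex_of_real a * w + \<i> * complex_of_real b"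
  have "f holomorphic_on RHP"
    using f by (simp add: H2_def)
  moreover have "?\<phi> ` RHP \<subseteq> RHP"
    using a by (auto simp: RHP_def)
  ultimately have "(f \<circ> ?\<phi>) holomorphic_on RHP"
    by (intro holomorphic_on_compose_gen holomorphic_intros)
  then have "comp_op ?\<phi> f holomorphic_on RHP"
    by (rule holomorphic_transform) (simp add: comp_op_def)
  moreover have "H2_norm_sq (comp_op ?\<phi> f) < \<infinity>"
    using f H2_norm_sq_comp_affine[OF a f, of b] by (simp add: H2_def ennreal_mult_less_top)
  ultimately show ?thesis
    by (simp add: H2_def comp_op_def)
qed

definition scales_H2_norm :: "((complex \<Rightarrow> complex) \<Rightarrow> (complex \<Rightarrow> complex)) \<Rightarrow> real \<Rightarrow> bool" where
  "scales_H2_norm S c \<longleftrightarrow> (\<forall>f\<in>H2. S f \<in> H2 \<and> H2_norm (S f) = c * H2_norm f)"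

lemma scales_H2_norm_comp_affine:
  fixes a b :: real
  assumes "a > 0"
  shows "scales_H2_norm (comp_op (\<lambda>w. complex_of_real a * w + \<i> * complex_of_real b)) (1 / sqrt a)"
  unfolding scales_H2_norm_def
proof
  fix f assume f: "f \<in> H2"
  then show "comp_op (\<lambda>w. complex_of_real a * w + \<i> * complex_of_real b) f \<in> H2 \<and>
    H2_norm (comp_op (\<lambda>w. complex_of_real a * w + \<i> * complex_of_real b) f) = 1 / sqrt a * H2_norm f"
    using assms comp_affine_in_H2 H2_norm_eq_if_H2_norm_sq_eq[OF f _ H2_norm_sq_comp_affine]
    by (simp add: real_sqrt_divide)
qed

lemma scales_H2_norm_funpow:
  assumes "scales_H2_norm S c"
  shows "scales_H2_norm (S ^^ n) (c ^ n)"
  by (induction n) (use assms in \<open>auto simp: scales_H2_norm_def\<close>)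

lemma scales_H2_norm_inverse:
  assumes S: "scales_H2_norm S c" and "c \<noteq> 0" and "inverse_op_H2 S T"
  shows "scales_H2_norm T (1 / c)"
  unfolding scales_H2_norm_def
proof
  fix f assume f: "f \<in> H2"
  then have "T f \<in> H2" "S (T f) = f"
    using \<open>inverse_op_H2 S T\<close> by (auto simp: inverse_op_H2_def bounded_op_H2_def)
  then show "T f \<in> H2 \<and> H2_norm (T f) = 1 / c * H2_norm f"
    using S \<open>c \<noteq> 0\<close> by (auto simp: scales_H2_norm_def)
qed

lemma bounded_op_H2_if_scales_H2_norm: "scales_H2_norm S c \<Longrightarrow> bounded_op_H2 S"
  by (auto simp: scales_H2_norm_def bounded_op_H2_def)

lemma inverse_op_H2_comp_affine:
  fixes a b :: real
  assumes a: "a > 0"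
  shows "inverse_op_H2 (comp_op (\<lambda>w. complex_of_real a * w + \<i> * complex_of_real b))
          (comp_op (\<lambda>w. complex_of_real (1/a) * w + \<i> * complex_of_real (-b/a)))"
proof -
  define \<phi> where "\<phi> = (\<lambda>w. complex_of_real a * w + \<i> * complex_of_real b)"
  define \<psi> where "\<psi> = (\<lambda>w. complex_of_real (1/a) * w + \<i> * complex_of_real (-b/a))"
  have "\<phi> (\<psi> w) = w" "\<psi> (\<phi> w) = w" for w
    using a by (simp_all add: \<phi>_def \<psi>_def complex_eq_iff field_simps)
  moreover have "\<phi> w \<in> RHP" "\<psi> w \<in> RHP" if "w \<in> RHP" for w
    using that a by (auto simp: \<phi>_def \<psi>_def RHP_def)
  ultimately have "comp_op \<psi> (comp_op \<phi> f) = f \<and> comp_op \<phi> (comp_op \<psi> f) = f" if "f \<in> H2" for f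
    using that by (auto simp: comp_op_def H2_def fun_eq_iff)
  moreover have "bounded_op_H2 (comp_op \<psi>)"
    using scales_H2_norm_comp_affine[of "1/a" "-b/a"] a
    by (auto simp: \<psi>_def intro: bounded_op_H2_if_scales_H2_norm)
  ultimately show ?thesis
    unfolding inverse_op_H2_def \<phi>_def \<psi>_def by blast
qed

lemma unif_expansive_imp_expansive_H2:
  assumes "unif_expansive_H2 S T"
  shows "expansive_H2 S T"
  unfolding expansive_H2_def
proof (intro ballI impI)
  obtain n where n: "\<And>f. f \<in> H2 \<Longrightarrow> H2_norm f = 1 \<Longrightarrow>
      H2_norm ((S ^^ n) f) \<ge> 2 \<or> H2_norm ((T ^^ n) f) \<ge> 2"
    using assms by (auto simp: unif_expansive_H2_def)
  have "int_pow_op S T (int n) = S ^^ n" "int_pow_op S T (- int n) = T ^^ n"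
    by (simp add: int_pow_op_def, cases "n = 0", simp_all add: int_pow_op_def)
  moreover fix f assume "f \<in> H2" "H2_norm f = 1"
  ultimately have "H2_norm (int_pow_op S T (int n) f) \<ge> 2 \<or> H2_norm (int_pow_op S T (- int n) f) \<ge> 2"
    using n by simp
  then show "\<exists>k. H2_norm (int_pow_op S T k f) \<ge> 2"
    by blast
qed

lemma not_expansive_H2_if_isometry:
  assumes "scales_H2_norm S 1" "inverse_op_H2 S T"
  shows "\<not> expansive_H2 S T"
proof -
  obtain f where f: "f \<in> H2" "H2_norm f = 1"
    using H2_unit_exists by blast
  have "scales_H2_norm (S ^^ n) 1" "scales_H2_norm (T ^^ n) 1" for n
    using scales_H2_norm_funpow[OF assms(1)]
      scales_H2_norm_funpow[OF scales_H2_norm_inverse[OF assms(1) _ assms(2)]] by simp_all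
  then have "H2_norm (int_pow_op S T k f) = 1" for k
    using f by (simp add: int_pow_op_def scales_H2_norm_def)
  then show ?thesis
    using f by (auto simp: expansive_H2_def)
qed

lemma unif_expansive_H2_if_scales_H2_norm:
  assumes S: "scales_H2_norm S c" and "c > 0" "c \<noteq> 1" and T: "inverse_op_H2 S T"
  shows "unif_expansive_H2 S T"
proof -
  have expand: "\<exists>n. \<forall>f\<in>H2. H2_norm f = 1 \<longrightarrow> H2_norm ((R ^^ n) f) \<ge> 2"
    if "scales_H2_norm R d" "d > 1" for R d
  proof -
    obtain n where "2 < d ^ n"
      using real_arch_pow \<open>d > 1\<close> by blast
    then show ?thesis
      using scales_H2_norm_funpow[OF that(1), of n] by (intro exI[of _ n]) (auto simp: scales_H2_norm_def)
  qed
  have "c > 1 \<or> 1 / c > 1"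
    using \<open>c > 0\<close> \<open>c \<noteq> 1\<close> by (cases "c > 1") (auto simp: less_divide_eq)
  then show ?thesis
  proof
    assume "c > 1"
    then show ?thesis
      using expand[OF S] by (auto simp: unif_expansive_H2_def)
  next
    assume "1 / c > 1"
    then show ?thesis
      using expand[OF scales_H2_norm_inverse[OF S _ T]] \<open>c > 0\<close>
      by (auto simp: unif_expansive_H2_def)
  qed
qed

lemma expansive_H2_iff_scaling_ne_1:
  assumes "scales_H2_norm S c" "c > 0" "inverse_op_H2 S T"
  shows "(expansive_H2 S T \<longleftrightarrow> unif_expansive_H2 S T) \<and> (unif_expansive_H2 S T \<longleftrightarrow> c \<noteq> 1)"
proof (cases "c = 1")
  case True
  then have "\<not> expansive_H2 S T"
    using assms not_expansive_H2_if_isometry by blast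
  then show ?thesis
    using True unif_expansive_imp_expansive_H2 by blast
next
  case False
  then show ?thesis
    using assms unif_expansive_H2_if_scales_H2_norm unif_expansive_imp_expansive_H2 by blast
qed

theorem theorem3p6:
  fixes a b :: real
  assumes "a > 0"
  defines "\<phi> \<equiv> (\<lambda>w. complex_of_real a * w + \<i> * complex_of_real b)"
  shows "invertible_op_H2 (comp_op \<phi>) \<and>
    (\<forall>T. inverse_op_H2 (comp_op \<phi>) T \<longrightarrow>
       ((expansive_H2 (comp_op \<phi>) T \<longleftrightarrow> unif_expansive_H2 (comp_op \<phi>) T) \<and>
        (unif_expansive_H2 (comp_op \<phi>) T \<longleftrightarrow> a \<noteq> 1)))"
proof -
  have scales: "scales_H2_norm (comp_op \<phi>) (1 / sqrt a)"
    unfolding \<phi>_def using scales_H2_norm_comp_affine[OF \<open>a > 0\<close>] .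
  have "invertible_op_H2 (comp_op \<phi>)"
    using bounded_op_H2_if_scales_H2_norm[OF scales] inverse_op_H2_comp_affine[OF \<open>a > 0\<close>]
    by (auto simp: invertible_op_H2_def \<phi>_def)
  moreover have "1 / sqrt a \<noteq> 1 \<longleftrightarrow> a \<noteq> 1"
    using \<open>a > 0\<close> by simp
  ultimately show ?thesis
    using expansive_H2_iff_scaling_ne_1[OF scales] \<open>a > 0\<close> by simp
qed

end
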